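(* Let $G=(V,E)$ be a regular simple graph on $n$ vertices and let $2\le k\le n-2$ be such that $F_k(G)$ is regular. Then there exists a constant $c$, depending on $k$, the degree of $G$ and the degree of $F_k(G)$, such that $d_A(b)=c$ for every vertex $A$ of $F_k(G)$ (i.e. every $k$-subset $A\subseteq V$) and every $b\in V\setminus A$.
   Context: For a simple graph $G=(V,E)$ on $n$ vertices and an integer $1\le k<n$, the $k$-token graph $F_k(G)$ is the graph whose vertices are all $k$-element subsets of $V$, two such subsets $A,B$ being adjacent whenever their symmetric difference $A\triangle B$ is a pair $\{a,b\}$ with $a$ adjacent to $b$ in $G$. For $X\subseteq V$ and $v\in V$, $d_X(v)$ denotes the number of neighbors of $v$ in $G$ that lie in $X$. *)

theory Defs
  imports Main
begin

definition simple_graph :: "'a set \<Rightarrow> ('a \<Rightarrow> 'a \<Rightarrow> bool) \<Rightarrow> bool" where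
  "simple_graph V E \<longleftrightarrow> finite V \<and> (\<forall>u v. E u v \<longrightarrow> u \<in> V \<and> v \<in> V)
     \<and> (\<forall>u v. E u v \<longrightarrow> E v u) \<and> (\<forall>v. \<not> E v v)"

definition dX :: "('a \<Rightarrow> 'a \<Rightarrow> bool) \<Rightarrow> 'a set \<Rightarrow> 'a \<Rightarrow> nat" where
  "dX E X v = card {u \<in> X. E v u}"

definition graph_degree :: "'a set \<Rightarrow> ('a \<Rightarrow> 'a \<Rightarrow> bool) \<Rightarrow> 'a \<Rightarrow> nat" where
  "graph_degree V E v = card {u \<in> V. E v u}"

definition regular_graph :: "'a set \<Rightarrow> ('a \<Rightarrow> 'a \<Rightarrow> bool) \<Rightarrow> bool" where
  "regular_graph V E \<longleftrightarrow> (\<exists>d. \<forall>v \<in> V. graph_degree V E v = d)"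

definition token_vertices :: "'a set \<Rightarrow> nat \<Rightarrow> 'a set set" where
  "token_vertices V k = {A. A \<subseteq> V \<and> card A = k}"

definition token_adj :: "('a \<Rightarrow> 'a \<Rightarrow> bool) \<Rightarrow> 'a set \<Rightarrow> 'a set \<Rightarrow> bool" where
  "token_adj E A B \<longleftrightarrow> (\<exists>a b. (A - B) \<union> (B - A) = {a, b} \<and> E a b)"

end

theory Submission
  imports Defs
begin

text \<open>
  Write \<open>s(A) = \<Sum>a\<in>A. d\<^sub>A(a)\<close> for twice the number of edges inside \<open>A\<close>.
  The neighbours of a \<open>k\<close>-set \<open>A\<close> in \<open>F\<^sub>k(G)\<close> correspond bijectively to the edges
  leaving \<open>A\<close>, so in a \<open>d\<close>-regular graph \<open>A\<close> has degree \<open>k d - s(A)\<close>; regularity of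
  \<open>F\<^sub>k(G)\<close> therefore makes \<open>s\<close> constant on \<open>k\<close>-sets. Since
  \<open>s(C \<union> {x}) = s(C) + 2 d\<^sub>C(x)\<close>, the value \<open>d\<^sub>C(x)\<close> does not depend on \<open>x \<notin> C\<close> for
  \<open>(k-1)\<close>-sets \<open>C\<close>. Applied to \<open>C = A - {a}\<close> this gives
  \<open>d\<^sub>A(b) = d\<^sub>A(a) + [a b \<in> E]\<close> for \<open>a \<in> A\<close>, \<open>b \<notin> A\<close>, and summing over \<open>a \<in> A\<close> yields
  \<open>(k - 1) d\<^sub>A(b) = s(A)\<close>, which is a constant.
\<close>

lemma simple_graph_finite: "simple_graph V E \<Longrightarrow> finite V"
  and simple_graph_sym: "simple_graph V E \<Longrightarrow> E u v \<Longrightarrow> E v u"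
  and simple_graph_irrefl: "simple_graph V E \<Longrightarrow> \<not> E v v"
  unfolding simple_graph_def by blast+

lemma sum_adjacent_indicator_eq_dX:
  assumes "simple_graph V E" "finite A"
  shows "(\<Sum>a\<in>A. if E a b then 1 else 0) = dX E A b"
proof -
  have "{a \<in> A. E a b} = {u \<in> A. E b u}"
    using simple_graph_sym[OF assms(1)] by auto
  then show ?thesis
    unfolding dX_def using assms(2) by (simp add: sum.inter_filter[symmetric])
qed

lemma dX_insert:
  assumes "finite C" "x \<notin> C"
  shows "dX E (insert x C) a = dX E C a + (if E a x then 1 else 0)"
proof -
  have "{u \<in> insert x C. E a u} = (if E a x then insert x {u \<in> C. E a u} else {u \<in> C. E a u})"
    by auto
  then show ?thesis unfolding dX_def using assms by auto
qed

definition edge_boundary :: "'a set \<Rightarrow> ('a \<Rightarrow> 'a \<Rightarrow> bool) \<Rightarrow> 'a set \<Rightarrow> ('a \<times> 'a) set" where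
  "edge_boundary V E A = {(a, b). a \<in> A \<and> b \<in> V - A \<and> E a b}"

lemma inj_on_swap: "inj_on (\<lambda>(a, b). insert b (A - {a})) (A \<times> - A)"
proof (rule inj_onI, clarsimp)
  fix a b a' b'
  assume a: "a \<in> A" "b \<notin> A" "a' \<in> A" "b' \<notin> A" and eq: "insert b (A - {a}) = insert b' (A - {a'})"
  have "b = b'" using a eq by (metis insert_iff insertI1 Diff_iff)
  moreover have "a = a'"
  proof (rule ccontr)
    assume "a \<noteq> a'"
    then have "a \<in> insert b (A - {a})" using eq a(1) by simp
    then show False using a(1,2) by auto
  qed
  ultimately show "a = a' \<and> b = b'" by blast
qed

lemma token_adj_imp_swap:
  assumes "simple_graph V E" "finite A" "finite B" "card B = card A" "token_adj E A B"
  obtains a b where "a \<in> A" "b \<notin> A" "E a b" "B = insert b (A - {a})"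
proof -
  obtain a b where ab: "(A - B) \<union> (B - A) = {a, b}" "E a b"
    using assms(5) unfolding token_adj_def by blast
  have "a \<noteq> b" using ab(2) simple_graph_irrefl[OF assms(1)] by blast
  have "card (A - B) = card (B - A)"
    using assms(2-4) by (simp add: card_Diff_subset_Int Int_commute)
  moreover have "card (A - B) + card (B - A) = 2"
    using card_Un_disjoint[of "A - B" "B - A"] assms(2,3) ab(1) \<open>a \<noteq> b\<close> by fastforce
  ultimately have "card (A - B) = 1" "card (B - A) = 1" by simp_all
  then obtain x y where x: "A - B = {x}" and y: "B - A = {y}"
    by (auto simp: card_1_singleton_iff)
  have "(x = a \<and> y = b) \<or> (x = b \<and> y = a)"
    using ab(1) x y \<open>a \<noteq> b\<close> by (auto simp: doubleton_eq_iff)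
  then have "E x y" using ab(2) simple_graph_sym[OF assms(1)] by blast
  moreover have "x \<in> A" "y \<notin> A" "B = insert y (A - {x})" using x y by blast+
  ultimately show thesis using that by blast
qed

lemma token_neighbours_eq_swaps:
  assumes "simple_graph V E" "A \<subseteq> V"
  shows "{B \<in> token_vertices V (card A). token_adj E A B}
           = (\<lambda>(a, b). insert b (A - {a})) ` edge_boundary V E A"
proof -
  have finA: "finite A" using finite_subset[OF assms(2) simple_graph_finite[OF assms(1)]] .
  show ?thesis
  proof (intro equalityI subsetI)
    fix B assume "B \<in> {B \<in> token_vertices V (card A). token_adj E A B}"
    then have "B \<subseteq> V" "card B = card A" "token_adj E A B"
      unfolding token_vertices_def by auto
    moreover have "finite B" using \<open>B \<subseteq> V\<close> simple_graph_finite[OF assms(1)] finite_subset by blast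
    ultimately obtain a b where ab: "a \<in> A" "b \<notin> A" "E a b" and B: "B = insert b (A - {a})"
      using token_adj_imp_swap[OF assms(1) finA] by blast
    have "(a, b) \<in> edge_boundary V E A"
      using ab \<open>B \<subseteq> V\<close> B unfolding edge_boundary_def by simp
    then show "B \<in> (\<lambda>(a, b). insert b (A - {a})) ` edge_boundary V E A"
      by (rule rev_image_eqI) (simp add: B)
  next
    fix B assume "B \<in> (\<lambda>(a, b). insert b (A - {a})) ` edge_boundary V E A"
    then obtain a b where ab: "a \<in> A" "b \<in> V - A" "E a b" and B: "B = insert b (A - {a})"
      unfolding edge_boundary_def by auto
    have "(A - B) \<union> (B - A) = {a, b}" using ab B by auto
    moreover have "card B = card A" using ab(2) finA by (simp add: B card.remove[OF finA ab(1)])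
    moreover have "B \<subseteq> V" using ab assms(2) B by auto
    ultimately show "B \<in> {B \<in> token_vertices V (card A). token_adj E A B}"
      unfolding token_vertices_def token_adj_def using ab(3) by blast
  qed
qed

lemma token_degree_eq_card_edge_boundary:
  assumes "simple_graph V E" "A \<subseteq> V"
  shows "graph_degree (token_vertices V (card A)) (token_adj E) A = card (edge_boundary V E A)"
proof -
  have "inj_on (\<lambda>(a, b). insert b (A - {a})) (edge_boundary V E A)"
    by (rule inj_on_subset[OF inj_on_swap]) (auto simp: edge_boundary_def)
  then show ?thesis
    unfolding graph_degree_def token_neighbours_eq_swaps[OF assms] by (rule card_image)
qed

definition inner_degree_sum :: "('a \<Rightarrow> 'a \<Rightarrow> bool) \<Rightarrow> 'a set \<Rightarrow> nat" where
  "inner_degree_sum E A = (\<Sum>a\<in>A. dX E A a)"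

lemma card_edge_boundary_add_inner_degree_sum:
  assumes "simple_graph V E" "A \<subseteq> V" and deg: "\<And>v. v \<in> V \<Longrightarrow> graph_degree V E v = d"
  shows "card (edge_boundary V E A) + inner_degree_sum E A = card A * d"
proof -
  have finV: "finite V" using simple_graph_finite[OF assms(1)] .
  have finA: "finite A" using finite_subset[OF assms(2) finV] .
  have degree_split: "graph_degree V E a = card {u \<in> V - A. E a u} + dX E A a" for a
  proof -
    have "{u \<in> V. E a u} = {u \<in> V - A. E a u} \<union> {u \<in> A. E a u}" using assms(2) by auto
    moreover have "card ({u \<in> V - A. E a u} \<union> {u \<in> A. E a u})
                    = card {u \<in> V - A. E a u} + card {u \<in> A. E a u}"
      by (rule card_Un_disjoint) (use finV finA in auto)
    ultimately show ?thesis unfolding graph_degree_def dX_def by simp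
  qed
  have "edge_boundary V E A = (SIGMA a:A. {u \<in> V - A. E a u})"
    unfolding edge_boundary_def by auto
  then have "card (edge_boundary V E A) = (\<Sum>a\<in>A. card {u \<in> V - A. E a u})"
    using finA finV by (simp add: card_SigmaI)
  then have "card (edge_boundary V E A) + inner_degree_sum E A = (\<Sum>a\<in>A. graph_degree V E a)"
    unfolding inner_degree_sum_def degree_split by (simp add: sum.distrib)
  also have "\<dots> = card A * d" using deg assms(2) by (simp add: subset_iff)
  finally show ?thesis .
qed

lemma inner_degree_sum_insert:
  assumes "simple_graph V E" "finite C" "x \<notin> C"
  shows "inner_degree_sum E (insert x C) = inner_degree_sum E C + 2 * dX E C x"
proof -
  have "inner_degree_sum E (insert x C) = dX E (insert x C) x + (\<Sum>a\<in>C. dX E (insert x C) a)"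
    unfolding inner_degree_sum_def using assms(2,3) by simp
  also have "\<dots> = dX E C x + (\<Sum>a\<in>C. dX E C a + (if E a x then 1 else 0))"
    using dX_insert[OF assms(2,3)] simple_graph_irrefl[OF assms(1)] by simp
  also have "\<dots> = inner_degree_sum E C + 2 * dX E C x"
    unfolding inner_degree_sum_def sum.distrib sum_adjacent_indicator_eq_dX[OF assms(1,2)] by simp
  finally show ?thesis .
qed

lemma dX_swap_of_inner_degree_sum_const:
  assumes "simple_graph V E"
    and s: "\<And>A. A \<subseteq> V \<Longrightarrow> card A = k \<Longrightarrow> inner_degree_sum E A = s"
    and "A \<subseteq> V" "card A = k" "a \<in> A" "b \<in> V - A"
  shows "dX E A b = dX E A a + (if E a b then 1 else 0)"
proof -
  define C where "C = A - {a}"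
  have finC: "finite C" and "a \<notin> C" and A: "A = insert a C" and "C \<subseteq> V" "b \<notin> C"
    using assms(3-6) finite_subset[OF _ simple_graph_finite[OF assms(1)]] by (auto simp: C_def)
  have "card (insert b C) = k"
    using assms(4) finC \<open>b \<notin> C\<close> A \<open>a \<notin> C\<close> by simp
  then have "inner_degree_sum E (insert a C) = inner_degree_sum E (insert b C)"
    using s \<open>C \<subseteq> V\<close> assms(3-6) A by auto
  then have "dX E C a = dX E C b"
    using inner_degree_sum_insert[OF assms(1) finC] \<open>a \<notin> C\<close> \<open>b \<notin> C\<close> by simp
  then show ?thesis
    using dX_insert[OF finC \<open>a \<notin> C\<close>, of E] simple_graph_irrefl[OF assms(1)]
      simple_graph_sym[OF assms(1)] A by simp
qed

lemma dX_eq_of_inner_degree_sum_const: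
  assumes "simple_graph V E"
    and s: "\<And>A. A \<subseteq> V \<Longrightarrow> card A = k \<Longrightarrow> inner_degree_sum E A = s"
    and "A \<subseteq> V" "card A = k" "b \<in> V - A"
  shows "(k - 1) * dX E A b = s"
proof -
  have finA: "finite A" using finite_subset[OF assms(3) simple_graph_finite[OF assms(1)]] .
  have "k * dX E A b = (\<Sum>a\<in>A. dX E A b)" using assms(4) by simp
  also have "\<dots> = (\<Sum>a\<in>A. dX E A a + (if E a b then 1 else 0))"
    using dX_swap_of_inner_degree_sum_const[OF assms(1,2,3,4) _ assms(5)] by (rule sum.cong[OF refl])
  also have "\<dots> = s + dX E A b"
    using s[OF assms(3,4)] sum_adjacent_indicator_eq_dX[OF assms(1) finA]
    by (simp add: sum.distrib inner_degree_sum_def)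
  finally show ?thesis by (simp add: diff_mult_distrib)
qed

theorem lemma1:
  fixes V :: "'a set" and E :: "'a \<Rightarrow> 'a \<Rightarrow> bool" and k :: nat
  assumes "simple_graph V E"
    and "regular_graph V E"
    and "2 \<le> k" and "k + 2 \<le> card V"
    and "regular_graph (token_vertices V k) (token_adj E)"
  shows "\<exists>c. \<forall>A \<in> token_vertices V k. \<forall>b \<in> V - A. dX E A b = c"
proof -
  obtain d where d: "\<And>v. v \<in> V \<Longrightarrow> graph_degree V E v = d"
    using assms(2) unfolding regular_graph_def by blast
  obtain D where D: "\<And>A. A \<in> token_vertices V k \<Longrightarrow> graph_degree (token_vertices V k) (token_adj E) A = D"
    using assms(5) unfolding regular_graph_def by blast
  have s: "inner_degree_sum E A = k * d - D" if "A \<subseteq> V" "card A = k" for A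
    using card_edge_boundary_add_inner_degree_sum[OF assms(1) that(1) d]
      token_degree_eq_card_edge_boundary[OF assms(1) that(1)] D[of A] that
    unfolding token_vertices_def by auto
  have "dX E A b = (k * d - D) div (k - 1)" if "A \<in> token_vertices V k" "b \<in> V - A" for A b
  proof -
    have "(k - 1) * dX E A b = k * d - D"
      using dX_eq_of_inner_degree_sum_const[OF assms(1) s, where A = A and b = b] that
      unfolding token_vertices_def by blast
    moreover have "k - 1 \<noteq> 0" using assms(3) by simp
    ultimately show ?thesis by (metis nonzero_mult_div_cancel_left)
  qed
  then show ?thesis by blast
qed

end
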